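(* Let $\ell\ge1$ and let $\mathbf{s},\mathbf{p}\in\mathbb{Z}^{\ell+1}$ be column vectors with $\mathbf{s}_{\ell+1}=1$. Set $d:=\mathbf{s}^T\mathbf{p}$ and assume $d\neq0$; let $\gamma$ be the gcd of the entries of $\mathbf{p}$. Then the matrix $L:=dI_{\ell+1}-\mathbf{p}\mathbf{s}^T$ has cokernel $$\mathbb{Z}^{\ell+1}/\mathrm{im}\,L\cong\mathbb{Z}\oplus\mathbb{Z}/\gamma\mathbb{Z}\oplus(\mathbb{Z}/d\mathbb{Z})^{\ell-1}.$$ *)

theory Defs
  imports "HOL-Algebra.Algebra"
begin

definition intvec_group :: "nat \<Rightarrow> (nat \<Rightarrow> int) monoid" where
  "intvec_group l = product_group {..l} (\<lambda>_. integer_group)"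

definition Lmap :: "nat \<Rightarrow> (nat \<Rightarrow> int) \<Rightarrow> (nat \<Rightarrow> int) \<Rightarrow> (nat \<Rightarrow> int) \<Rightarrow> (nat \<Rightarrow> int)" where
  "Lmap l s p v = (\<lambda>i\<in>{..l}. (\<Sum>j\<le>l. s j * p j) * v i - p i * (\<Sum>j\<le>l. s j * v j))"

definition target_group :: "nat \<Rightarrow> int \<Rightarrow> int \<Rightarrow> (nat \<Rightarrow> int) monoid" where
  "target_group l g d = product_group {..l}
     (\<lambda>i. if i = 0 then integer_group
          else if i = 1 then integer_mod_group (nat \<bar>g\<bar>)
          else integer_mod_group (nat \<bar>d\<bar>))"

end

theory Submission
  imports Defs
begin

text \<open>
  Since \<open>s\<^sub>l = 1\<close>, the functional \<open>v \<mapsto> s\<^sup>T v\<close> splits off a free summand \<open>\<int>\<close>: it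
  vanishes on the image of \<open>L\<close>, and on the first \<open>l\<close> coordinates \<open>L v = d v' - (s\<^sup>T v) p'\<close>,
  where \<open>s\<^sup>T v\<close> and the truncation \<open>v'\<close> are independent.  So the cokernel is
  \<open>\<int> \<oplus> \<int>\<^sup>l / (d \<int>\<^sup>l + \<int> p')\<close> with \<open>p'\<close> the first \<open>l\<close> entries of \<open>p\<close>.  Euclid's algorithm,
  run with \<open>2 \<times> 2\<close> unimodular operations on the coordinates \<open>0\<close> and \<open>k\<close>, yields \<open>A \<in> GL\<^sub>l(\<int>)\<close>
  with \<open>A p' = g e\<^sub>0\<close> and \<open>|g| = gcd p'\<close>.  Since \<open>A\<close> fixes \<open>d \<int>\<^sup>l\<close>, it maps \<open>d \<int>\<^sup>l + \<int> p'\<close>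
  onto \<open>gcd(g, d) \<int> \<oplus> d \<int> \<oplus> \<dots> \<oplus> d \<int>\<close>, and \<open>gcd(g, d) = \<gamma>\<close> because \<open>d \<equiv> p\<^sub>l\<close> modulo \<open>g\<close>.
\<close>

type_synonym zvec = "nat \<Rightarrow> int"

definition int_linear :: "(zvec \<Rightarrow> zvec) \<Rightarrow> bool" where
  "int_linear A \<longleftrightarrow> (\<forall>a b x y. A (\<lambda>i. a * x i + b * y i) = (\<lambda>i. a * A x i + b * A y i))"

definition acts_below :: "nat \<Rightarrow> (zvec \<Rightarrow> zvec) \<Rightarrow> bool" where
  "acts_below n A \<longleftrightarrow> (\<forall>x i. n \<le> i \<longrightarrow> A x i = x i)
     \<and> (\<forall>x y. (\<forall>i<n. x i = y i) \<longrightarrow> (\<forall>i<n. A x i = A y i))"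

text \<open>An element of \<open>GL\<^sub>n(\<int>)\<close> and its inverse, both extended by the identity beyond
  coordinate \<open>n\<close>.\<close>

definition unimodular_pair :: "nat \<Rightarrow> (zvec \<Rightarrow> zvec) \<Rightarrow> (zvec \<Rightarrow> zvec) \<Rightarrow> bool" where
  "unimodular_pair n A B \<longleftrightarrow> int_linear A \<and> int_linear B \<and> acts_below n A \<and> acts_below n B
     \<and> (\<forall>x. B (A x) = x) \<and> (\<forall>x. A (B x) = x)"

lemma int_linear_id: "int_linear id"
  by (simp add: int_linear_def)

lemma int_linear_comp: "int_linear A \<Longrightarrow> int_linear B \<Longrightarrow> int_linear (A \<circ> B)"
  by (simp add: int_linear_def)

lemma int_linear_add:
  assumes "int_linear A"
  shows "A (\<lambda>i. x i + y i) = (\<lambda>i. A x i + A y i)"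
proof -
  have "A (\<lambda>i. 1 * x i + 1 * y i) = (\<lambda>i. 1 * A x i + 1 * A y i)"
    using assms unfolding int_linear_def by blast
  then show ?thesis by simp
qed

lemma acts_below_id: "acts_below n id"
  by (simp add: acts_below_def)

lemma acts_below_comp: "acts_below n A \<Longrightarrow> acts_below n B \<Longrightarrow> acts_below n (A \<circ> B)"
  by (simp add: acts_below_def)

lemma acts_below_mono:
  assumes "acts_below n A" "n \<le> m"
  shows "acts_below m A"
  unfolding acts_below_def
proof (intro conjI allI impI)
  show "A x i = x i" if "m \<le> i" for x i
    using assms that unfolding acts_below_def by auto
  show "A x i = A y i" if "\<forall>i<m. x i = y i" "i < m" for x y i
    using assms that unfolding acts_below_def by (cases "i < n") auto
qed

lemma acts_below_local:
  "acts_below n A \<Longrightarrow> (\<And>i. i < n \<Longrightarrow> x i = y i) \<Longrightarrow> k < n \<Longrightarrow> A x k = A y k"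
  unfolding acts_below_def by blast

lemma unimodular_pair_id: "unimodular_pair n id id"
  by (simp add: unimodular_pair_def int_linear_id acts_below_id)

lemma unimodular_pair_comp:
  "unimodular_pair n A B \<Longrightarrow> unimodular_pair n A' B' \<Longrightarrow> unimodular_pair n (A' \<circ> A) (B \<circ> B')"
  by (simp add: unimodular_pair_def int_linear_comp acts_below_comp)

lemma unimodular_pair_mono: "unimodular_pair n A B \<Longrightarrow> n \<le> m \<Longrightarrow> unimodular_pair m A B"
  unfolding unimodular_pair_def using acts_below_mono by blast

definition mat2_at :: "nat \<Rightarrow> int \<Rightarrow> int \<Rightarrow> int \<Rightarrow> int \<Rightarrow> zvec \<Rightarrow> zvec" where
  "mat2_at k \<alpha> \<beta> \<gamma> \<delta> x = x(0 := \<alpha> * x 0 + \<beta> * x k, k := \<gamma> * x 0 + \<delta> * x k)"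

lemma int_linear_mat2_at: "int_linear (mat2_at k \<alpha> \<beta> \<gamma> \<delta>)"
  by (auto simp: int_linear_def mat2_at_def fun_eq_iff algebra_simps)

lemma acts_below_mat2_at: "k < n \<Longrightarrow> acts_below n (mat2_at k \<alpha> \<beta> \<gamma> \<delta>)"
  by (simp add: acts_below_def mat2_at_def)

lemma mat2_at_inverse:
  assumes "0 < k" and det: "\<alpha> * \<delta> - \<beta> * \<gamma> = 1"
  shows "mat2_at k \<delta> (-\<beta>) (-\<gamma>) \<alpha> (mat2_at k \<alpha> \<beta> \<gamma> \<delta> x) = x"
proof -
  have "\<delta> * (\<alpha> * a + \<beta> * b) + - \<beta> * (\<gamma> * a + \<delta> * b) = (\<alpha> * \<delta> - \<beta> * \<gamma>) * a"
    "- \<gamma> * (\<alpha> * a + \<beta> * b) + \<alpha> * (\<gamma> * a + \<delta> * b) = (\<alpha> * \<delta> - \<beta> * \<gamma>) * b" for a b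
    by (simp_all add: algebra_simps)
  then show ?thesis
    using assms by (simp add: mat2_at_def fun_eq_iff)
qed

lemma unimodular_pair_mat2_at:
  assumes "0 < k" "k < n" and det: "\<alpha> * \<delta> - \<beta> * \<gamma> = 1"
  shows "unimodular_pair n (mat2_at k \<alpha> \<beta> \<gamma> \<delta>) (mat2_at k \<delta> (-\<beta>) (-\<gamma>) \<alpha>)"
proof -
  have det': "\<delta> * \<alpha> - - \<beta> * - \<gamma> = 1"
    using det by (simp add: mult.commute)
  show ?thesis
    using mat2_at_inverse[OF \<open>0 < k\<close> det] mat2_at_inverse[OF \<open>0 < k\<close> det'] \<open>k < n\<close>
    by (simp add: unimodular_pair_def int_linear_mat2_at acts_below_mat2_at)
qed

text \<open>The matrix \<open>[[u, v], [-b, a]]\<close> has determinant 1 and maps \<open>(g, h)\<close> to \<open>(gcd g h, 0)\<close>.\<close>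

lemma bezout_unimodular_matrix:
  fixes g h :: int
  obtains u v a b where "u * a + v * b = 1" "u * g + v * h = gcd g h" "a * h = b * g"
proof (cases "gcd g h = 0")
  case True
  then have "g = 0" "h = 0" by simp_all
  show ?thesis
    by (rule that[where u = 1 and v = 0 and a = 1 and b = 0]) (simp_all add: \<open>g = 0\<close> \<open>h = 0\<close>)
next
  case False
  obtain u v where uv: "u * g + v * h = gcd g h"
    using bezout_int by blast
  define a b where "a = g div gcd g h" and "b = h div gcd g h"
  have g: "g = gcd g h * a" and h: "h = gcd g h * b"
    by (simp_all add: a_def b_def)
  have "gcd g h * (u * a + v * b) = gcd g h * 1"
    using uv by (subst (asm) g, subst (asm) h) (simp add: algebra_simps)
  then have "u * a + v * b = 1"
    using False mult_cancel_left by blast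
  moreover have "a * h = b * g"
    by (subst g, subst h) simp
  ultimately show ?thesis using that uv by blast
qed

lemma unimodular_reduction:
  fixes p :: zvec
  assumes "1 \<le> n"
  shows "\<exists>A B. unimodular_pair n A B \<and> \<bar>A p 0\<bar> = Gcd (p ` {..<n})
           \<and> (\<forall>k. 0 < k \<and> k < n \<longrightarrow> A p k = 0)"
  using assms
proof (induction n rule: nat_induct_at_least)
  case base
  have "\<bar>id p 0\<bar> = Gcd (p ` {..<1})"
    by (simp add: lessThan_Suc)
  then show ?case
    using unimodular_pair_id by blast
next
  case (Suc n)
  from Suc.IH obtain A B where AB: "unimodular_pair n A B" and A0: "\<bar>A p 0\<bar> = Gcd (p ` {..<n})"
    and A_zero: "\<forall>k. 0 < k \<and> k < n \<longrightarrow> A p k = 0"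
    by auto
  have An: "A p n = p n"
    using AB by (simp add: unimodular_pair_def acts_below_def)
  obtain u v a b where det: "u * a + v * b = 1" and row: "u * A p 0 + v * p n = gcd (A p 0) (p n)"
    and col: "a * p n = b * A p 0"
    by (rule bezout_unimodular_matrix)
  define M where "M = mat2_at n u v (-b) a"
  have "unimodular_pair (Suc n) M (mat2_at n a (-v) (- (-b)) u)"
    unfolding M_def using \<open>1 \<le> n\<close> det by (intro unimodular_pair_mat2_at) simp_all
  then have "unimodular_pair (Suc n) (M \<circ> A) (B \<circ> mat2_at n a (-v) (- (-b)) u)"
    by (rule unimodular_pair_comp[OF unimodular_pair_mono[OF AB le_SucI[OF order_refl]]])
  moreover have "\<bar>(M \<circ> A) p 0\<bar> = Gcd (p ` {..<Suc n})"
    using row \<open>1 \<le> n\<close> by (simp add: M_def mat2_at_def An lessThan_Suc gcd.commute flip: A0)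
  moreover have "(M \<circ> A) p k = 0" if "0 < k" "k < Suc n" for k
    using that A_zero col by (auto simp: M_def mat2_at_def An less_Suc_eq mult.commute)
  ultimately show ?case by blast
qed

lemma hom_into_product_group:
  assumes "\<And>i. i \<in> I \<Longrightarrow> (\<lambda>x. f x i) \<in> hom G (H i)"
  shows "(\<lambda>x. \<lambda>i\<in>I. f x i) \<in> hom G (product_group I H)"
  using assms by (auto simp: hom_def Pi_def fun_eq_iff)

lemma hom_mod_integer_mod_group:
  assumes "f \<in> hom G integer_group"
  shows "(\<lambda>x. f x mod int n) \<in> hom G (integer_mod_group n)"
  using assms by (auto simp: hom_def carrier_integer_mod_group mod_add_eq)

lemma mod_carrier_integer_mod_group: "x \<in> carrier (integer_mod_group n) \<Longrightarrow> x mod int n = x"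
  by (auto simp: carrier_integer_mod_group split: if_splits)

lemma additive_hom_intvec_group:
  assumes add: "\<And>v w. f (\<lambda>i. v i + w i) = f v + f w"
    and local: "\<And>v w. (\<And>i. i \<le> l \<Longrightarrow> v i = w i) \<Longrightarrow> f v = f w"
  shows "f \<in> hom (intvec_group l) integer_group"
proof (rule homI)
  fix v w
  have "f (\<lambda>i\<in>{..l}. v i + w i) = f (\<lambda>i. v i + w i)"
    by (rule local) simp
  then show "f (v \<otimes>\<^bsub>intvec_group l\<^esub> w) = f v \<otimes>\<^bsub>integer_group\<^esub> f w"
    by (simp add: intvec_group_def add)
qed simp

lemma sum_atMost_split_last: "(\<Sum>j\<le>(l::nat). f j) = (\<Sum>j<l. f j) + f l"
  by (simp add: lessThan_Suc_atMost [symmetric] del: lessThan_Suc_atMost)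

lemma Lmap_image_iff:
  fixes s p :: zvec
  assumes s_last: "s l = 1"
  defines "d \<equiv> \<Sum>j\<le>l. s j * p j"
  shows "v \<in> Lmap l s p ` carrier (intvec_group l) \<longleftrightarrow>
    v \<in> carrier (intvec_group l) \<and> (\<Sum>j\<le>l. s j * v j) = 0
      \<and> (\<exists>c y. \<forall>i<l. v i = c * p i + d * y i)"
proof
  assume "v \<in> Lmap l s p ` carrier (intvec_group l)"
  then obtain x where v: "v = Lmap l s p x"
    by blast
  define S where "S = (\<Sum>j\<le>l. s j * x j)"
  have v_eq: "v = (\<lambda>i\<in>{..l}. d * x i - p i * S)"
    by (simp add: v Lmap_def d_def S_def)
  have "(\<Sum>j\<le>l. s j * v j) = (\<Sum>j\<le>l. d * (s j * x j) - S * (s j * p j))"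
    by (simp add: v_eq algebra_simps)
  also have "\<dots> = d * S - S * d"
    by (simp add: sum_subtractf sum_distrib_left S_def d_def)
  finally have "(\<Sum>j\<le>l. s j * v j) = d * S - S * d" .
  moreover have "\<forall>i<l. v i = (- S) * p i + d * x i"
    by (simp add: v_eq)
  then have "\<exists>c y. \<forall>i<l. v i = c * p i + d * y i"
    by blast
  moreover have "v \<in> carrier (intvec_group l)"
    by (simp add: v_eq intvec_group_def)
  ultimately show "v \<in> carrier (intvec_group l) \<and> (\<Sum>j\<le>l. s j * v j) = 0
      \<and> (\<exists>c y. \<forall>i<l. v i = c * p i + d * y i)"
    by simp
next
  assume "v \<in> carrier (intvec_group l) \<and> (\<Sum>j\<le>l. s j * v j) = 0
      \<and> (\<exists>c y. \<forall>i<l. v i = c * p i + d * y i)"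
  then have v_ext: "v \<in> extensional {..l}" and sv: "(\<Sum>j\<le>l. s j * v j) = 0"
    and "\<exists>c y. \<forall>i<l. v i = c * p i + d * y i"
    by (simp_all add: intvec_group_def PiE_def)
  then obtain c y where v_below: "\<And>i. i < l \<Longrightarrow> v i = c * p i + d * y i"
    by blast
  define x where "x = (\<lambda>i\<in>{..l}. if i < l then y i else - c - (\<Sum>j<l. s j * y j))"
  have sx: "(\<Sum>j\<le>l. s j * x j) = - c"
    by (simp add: sum_atMost_split_last x_def s_last)
  have "v l = - (\<Sum>j<l. s j * v j)"
    using sv by (simp add: sum_atMost_split_last s_last)
  also have "\<dots> = - (\<Sum>j<l. c * (s j * p j) + d * (s j * y j))"
    by (simp add: v_below algebra_simps)
  also have "\<dots> = - (c * (\<Sum>j<l. s j * p j) + d * (\<Sum>j<l. s j * y j))"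
    by (simp add: sum.distrib sum_distrib_left)
  also have "\<dots> = d * x l + c * p l"
    using s_last by (simp add: x_def d_def sum_atMost_split_last algebra_simps)
  finally have v_last: "v l = d * x l + c * p l" .
  have "Lmap l s p x = (\<lambda>i\<in>{..l}. d * x i + c * p i)"
    by (simp add: Lmap_def sx d_def mult.commute)
  also have "\<dots> = v"
  proof
    fix i
    show "(\<lambda>i\<in>{..l}. d * x i + c * p i) i = v i"
      using v_ext v_below[of i] v_last
      by (cases "i < l") (auto simp: x_def extensional_def)
  qed
  finally have "Lmap l s p x = v" .
  moreover have "x \<in> carrier (intvec_group l)"
    by (simp add: x_def intvec_group_def)
  ultimately show "v \<in> Lmap l s p ` carrier (intvec_group l)"
    by blast
qed

lemma unimodular_lattice_iff:
  assumes AB: "unimodular_pair n A B" and "0 < n"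
    and A_p: "\<And>k. 0 < k \<Longrightarrow> k < n \<Longrightarrow> A p k = 0"
  shows "(\<exists>c y. \<forall>i<n. w i = c * p i + d * y i) \<longleftrightarrow>
    (\<forall>k<n. (if k = 0 then gcd (A p 0) d else d) dvd A w k)"
proof
  assume "\<exists>c y. \<forall>i<n. w i = c * p i + d * y i"
  then obtain c y where w: "\<And>i. i < n \<Longrightarrow> w i = c * p i + d * y i"
    by blast
  have Aw: "A w k = c * A p k + d * A y k" if "k < n" for k
  proof -
    have "A w k = A (\<lambda>i. c * p i + d * y i) k"
      using AB w that by (intro acts_below_local[of n A]) (simp_all add: unimodular_pair_def)
    also have "\<dots> = c * A p k + d * A y k"
      using AB by (simp add: unimodular_pair_def int_linear_def)
    finally show ?thesis .
  qed
  show "\<forall>k<n. (if k = 0 then gcd (A p 0) d else d) dvd A w k"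
    using Aw A_p by simp
next
  assume dvd: "\<forall>k<n. (if k = 0 then gcd (A p 0) d else d) dvd A w k"
  then have "gcd (A p 0) d dvd A w 0"
    using \<open>0 < n\<close> by auto
  then obtain q where q: "A w 0 = gcd (A p 0) d * q"
    by (rule dvdE)
  obtain a b where bezout: "a * A p 0 + b * d = gcd (A p 0) d"
    using bezout_int by blast
  define z where "z = (\<lambda>k. if k = 0 then q * b else A w k div d)"
  have Aw: "A w k = (q * a) * A p k + d * z k" if "k < n" for k
  proof (cases "k = 0")
    case True
    then show ?thesis
      by (simp add: z_def q flip: bezout) (simp add: algebra_simps)
  next
    case False
    then have "d dvd A w k"
      using dvd[rule_format, OF that] by simp
    then show ?thesis
      using False that A_p by (simp add: z_def)
  qed
  have "w i = (q * a) * p i + d * B z i" if "i < n" for i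
  proof -
    have "w i = B (A w) i"
      using AB by (simp add: unimodular_pair_def)
    also have "\<dots> = B (\<lambda>k. (q * a) * A p k + d * z k) i"
      using AB Aw that by (intro acts_below_local[of n B]) (simp_all add: unimodular_pair_def)
    also have "\<dots> = (q * a) * p i + d * B z i"
      using AB by (simp add: unimodular_pair_def int_linear_def)
    finally show ?thesis .
  qed
  then show "\<exists>c y. \<forall>i<n. w i = c * p i + d * y i"
    by blast
qed

lemma Gcd_image_atMost_eq_gcd_sum:
  fixes s p :: zvec
  assumes s_last: "s l = 1" and g: "\<bar>g\<bar> = Gcd (p ` {..<l})"
  shows "Gcd (p ` {..l}) = gcd g (\<Sum>j\<le>l. s j * p j)"
proof -
  have "g dvd (\<Sum>j<l. s j * p j)"
  proof (rule dvd_sum)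
    fix j assume "j \<in> {..<l}"
    then have "\<bar>g\<bar> dvd p j"
      unfolding g by (simp add: Gcd_dvd)
    then show "g dvd s j * p j"
      by simp
  qed
  then obtain k where k: "(\<Sum>j<l. s j * p j) = k * g"
    by (metis dvd_def mult.commute)
  have "gcd g (\<Sum>j\<le>l. s j * p j) = gcd g (k * g + p l)"
    by (simp add: sum_atMost_split_last s_last k)
  also have "\<dots> = gcd g (p l)"
    by (rule gcd_add_mult)
  also have "\<dots> = Gcd (p ` {..l})"
    by (simp add: lessThan_Suc_atMost [symmetric] lessThan_Suc gcd.commute flip: g
        del: lessThan_Suc_atMost)
  finally show ?thesis ..
qed

locale cokernel_coordinates =
  fixes l :: nat and s p :: zvec and A B :: "zvec \<Rightarrow> zvec"
  assumes l_pos: "0 < l" and s_last: "s l = 1"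
    and unimodular: "unimodular_pair l A B"
    and A_p: "\<And>k. 0 < k \<Longrightarrow> k < l \<Longrightarrow> A p k = 0"
begin

definition d :: int where
  "d = (\<Sum>j\<le>l. s j * p j)"

definition \<gamma> :: int where
  "\<gamma> = gcd (A p 0) d"

definition modulus :: "nat \<Rightarrow> int" where
  "modulus i = (if i = 1 then \<gamma> else d)"

lemma target_group_eq:
  "target_group l \<gamma> d = product_group {..l}
     (\<lambda>i. if i = 0 then integer_group else integer_mod_group (nat \<bar>modulus i\<bar>))"
  unfolding target_group_def modulus_def by (rule arg_cong[where f = "product_group {..l}"]) auto

definition coker_map :: "zvec \<Rightarrow> zvec" where
  "coker_map = (\<lambda>v. \<lambda>i\<in>{..l}. if i = 0 then (\<Sum>j\<le>l. s j * v j) else A v (i - 1) mod \<bar>modulus i\<bar>)"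

lemma coordinate_hom: "k < l \<Longrightarrow> (\<lambda>v. A v k) \<in> hom (intvec_group l) integer_group"
  using unimodular
  by (intro additive_hom_intvec_group)
     (auto simp: unimodular_pair_def int_linear_add intro: acts_below_local)

lemma coker_map_hom: "coker_map \<in> hom (intvec_group l) (target_group l \<gamma> d)"
  unfolding coker_map_def target_group_eq
proof (rule hom_into_product_group)
  fix i
  assume "i \<in> {..l}"
  have "(\<lambda>v. \<Sum>j\<le>l. s j * v j) \<in> hom (intvec_group l) integer_group"
    by (rule additive_hom_intvec_group) (simp_all add: sum.distrib distrib_left)
  moreover have "(\<lambda>v. A v (i - 1) mod int (nat \<bar>modulus i\<bar>))
      \<in> hom (intvec_group l) (integer_mod_group (nat \<bar>modulus i\<bar>))" if "0 < i"
    using \<open>i \<in> {..l}\<close> that by (intro hom_mod_integer_mod_group coordinate_hom) simp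
  ultimately show "(\<lambda>v. if i = 0 then \<Sum>j\<le>l. s j * v j else A v (i - 1) mod \<bar>modulus i\<bar>)
      \<in> hom (intvec_group l) (if i = 0 then integer_group else integer_mod_group (nat \<bar>modulus i\<bar>))"
    by (cases "i = 0") simp_all
qed

lemma coker_map_surj: "coker_map ` carrier (intvec_group l) = carrier (target_group l \<gamma> d)"
proof
  show "coker_map ` carrier (intvec_group l) \<subseteq> carrier (target_group l \<gamma> d)"
    using coker_map_hom hom_carrier by blast
next
  show "carrier (target_group l \<gamma> d) \<subseteq> coker_map ` carrier (intvec_group l)"
  proof
    fix t
    assume t: "t \<in> carrier (target_group l \<gamma> d)"
    define u where "u = B (\<lambda>k. t (Suc k))"
    define v where "v = (\<lambda>i\<in>{..l}. if i < l then u i else t 0 - (\<Sum>j<l. s j * u j))"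
    have Av: "A v k = t (Suc k)" if "k < l" for k
    proof -
      have "A v k = A u k"
        using unimodular that
        by (intro acts_below_local[of l A]) (simp_all add: unimodular_pair_def v_def)
      then show ?thesis
        using unimodular by (simp add: u_def unimodular_pair_def)
    qed
    have "coker_map v = t"
    proof
      fix i
      show "coker_map v i = t i"
      proof (cases "i = 0")
        case True
        have "(\<Sum>j<l. s j * v j) = (\<Sum>j<l. s j * u j)"
          by (rule sum.cong) (simp_all add: v_def)
        then have "(\<Sum>j\<le>l. s j * v j) = t 0"
          using s_last by (simp add: sum_atMost_split_last v_def)
        then show ?thesis
          using True by (simp add: coker_map_def)
      next
        case nonzero: False
        show ?thesis
        proof (cases "i \<le> l")
          case True
          have "t i \<in> carrier (integer_mod_group (nat \<bar>modulus i\<bar>))"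
            using PiE_mem[OF t[unfolded target_group_eq carrier_product_group], of i] True nonzero
            by simp
          then have "t i mod \<bar>modulus i\<bar> = t i"
            by (drule_tac mod_carrier_integer_mod_group) simp
          then show ?thesis
            using Av[of "i - 1"] True nonzero by (simp add: coker_map_def)
        next
          case False
          then show ?thesis
            using t by (simp add: coker_map_def target_group_eq PiE_def extensional_def)
        qed
      qed
    qed
    moreover have "v \<in> carrier (intvec_group l)"
      by (simp add: v_def intvec_group_def)
    ultimately show "t \<in> coker_map ` carrier (intvec_group l)"
      by blast
  qed
qed

lemma coker_map_eq_one_iff:
  "coker_map v = \<one>\<^bsub>target_group l \<gamma> d\<^esub> \<longleftrightarrow>
    (\<Sum>j\<le>l. s j * v j) = 0 \<and> (\<forall>k<l. modulus (Suc k) dvd A v k)"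
proof -
  have one: "\<one>\<^bsub>target_group l \<gamma> d\<^esub> = (\<lambda>i\<in>{..l}. 0)"
    unfolding target_group_eq one_product_group by (rule restrict_ext) simp
  have split: "(\<forall>i\<le>l. P i) \<longleftrightarrow> P 0 \<and> (\<forall>k<l. P (Suc k))" for P
    by (metis bot_nat_0.extremum le_imp_less_Suc less_Suc_eq_0_disj less_eq_Suc_le)
  have "coker_map v \<in> extensional {..l}"
    by (simp add: coker_map_def)
  then have "coker_map v = \<one>\<^bsub>target_group l \<gamma> d\<^esub> \<longleftrightarrow> (\<forall>i\<le>l. coker_map v i = 0)"
    unfolding one by (auto intro: extensionalityI)
  also have "\<dots> \<longleftrightarrow> (\<Sum>j\<le>l. s j * v j) = 0 \<and> (\<forall>k<l. A v k mod \<bar>modulus (Suc k)\<bar> = 0)"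
    by (simp add: split coker_map_def Suc_le_eq)
  finally show ?thesis
    by (simp add: mod_eq_0_iff_dvd)
qed

lemma kernel_coker_map:
  "kernel (intvec_group l) (target_group l \<gamma> d) coker_map = Lmap l s p ` carrier (intvec_group l)"
proof -
  have "modulus (Suc k) = (if k = 0 then gcd (A p 0) d else d)" for k
    by (simp add: modulus_def \<gamma>_def)
  then have lattice: "(\<forall>k<l. modulus (Suc k) dvd A v k) \<longleftrightarrow>
      (\<exists>c y. \<forall>i<l. v i = c * p i + (\<Sum>j\<le>l. s j * p j) * y i)" for v
    using unimodular_lattice_iff[OF unimodular l_pos A_p] by (simp add: d_def)
  have "v \<in> kernel (intvec_group l) (target_group l \<gamma> d) coker_map \<longleftrightarrow>
      v \<in> carrier (intvec_group l) \<and> (\<Sum>j\<le>l. s j * v j) = 0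
        \<and> (\<forall>k<l. modulus (Suc k) dvd A v k)"
    for v by (simp add: kernel_def coker_map_eq_one_iff)
  then show ?thesis
    by (simp only: lattice Lmap_image_iff[where s = s and l = l, OF s_last] set_eq_iff simp_thms)
qed

lemma cokernel_iso: "intvec_group l Mod (Lmap l s p ` carrier (intvec_group l)) \<cong> target_group l \<gamma> d"
proof -
  interpret group_hom "intvec_group l" "target_group l \<gamma> d" coker_map
    using coker_map_hom
    by (simp add: group_hom_def group_hom_axioms_def intvec_group_def target_group_def)
  show ?thesis
    using FactGroup_iso[OF coker_map_surj] by (simp only: kernel_coker_map)
qed

end

theorem lemma4p2:
  fixes l :: nat and s p :: "nat \<Rightarrow> int"
  assumes "l \<ge> 1"
    and "s l = 1"
    and "(\<Sum>j\<le>l. s j * p j) \<noteq> 0"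
  shows "intvec_group l Mod (Lmap l s p ` carrier (intvec_group l))
           \<cong> target_group l (Gcd (p ` {..l})) (\<Sum>j\<le>l. s j * p j)"
proof -
  obtain A B where AB: "unimodular_pair l A B" and A_p0: "\<bar>A p 0\<bar> = Gcd (p ` {..<l})"
    and A_p: "\<forall>k. 0 < k \<and> k < l \<longrightarrow> A p k = 0"
    using unimodular_reduction[OF assms(1)] by blast
  interpret cokernel_coordinates l s p A B
    using assms(1,2) AB A_p by unfold_locales auto
  have "Gcd (p ` {..l}) = \<gamma>"
    unfolding \<gamma>_def d_def
    by (rule Gcd_image_atMost_eq_gcd_sum[where s = s and l = l, OF assms(2) A_p0])
  then show ?thesis
    using cokernel_iso by (simp add: d_def)
qed

end
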